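(* The uniform chirotopes are exactly the pre-CC-systems.
   Context: Let $E$ be a finite ground set whose elements are called points. Consider a boolean function on all ordered triples of distinct points of $E$; write $pqr$ to mean that the value associated with $(p,q,r)$ is true. The following axioms are understood with quantification over all pairwise distinct points: Axiom 1 (cyclic symmetry): $pqr \Longrightarrow qrp$. Axiom 2 (antisymmetry): $pqr \Longrightarrow \neg\, prq$. Axiom 3 (nondegeneracy): $pqr \vee prq$. Axiom 5 (transitivity): $tsp \wedge tsq \wedge tsr \wedge tpq \wedge tqr \Longrightarrow tpr$. (Given Axioms 1–3, Axiom 5 is equivalent to Axiom 5' (dual transitivity): $tps \wedge tqs \wedge trs \wedge tpq \wedge tqr \Longrightarrow tpr$.) A pre-CC-system is such a boolean function satisfying Axioms 1, 2, 3 and 5. A uniform chirotope is such a boolean function satisfying Axioms 1, 2, 3 and the Grassmann–Plücker relations: for all pairwise distinct points $t,p,q,r,s$, the set $\{(tpq \wedge trs) \vee (tqp \wedge tsr);\ (trp \wedge tqs) \vee (tpr \wedge tsq);\ (tps \wedge tqr) \vee (tsp \wedge trq)\}$ contains both the value true and the value false. *)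

theory Defs
  imports Main
begin

text \<open>A ternary boolean function C on the ground set E; only its values on
  triples of pairwise distinct points of E matter.\<close>

definition distinct3 :: "'a \<Rightarrow> 'a \<Rightarrow> 'a \<Rightarrow> bool" where
  "distinct3 p q r \<longleftrightarrow> p \<noteq> q \<and> p \<noteq> r \<and> q \<noteq> r"

definition axiom1 :: "'a set \<Rightarrow> ('a \<Rightarrow> 'a \<Rightarrow> 'a \<Rightarrow> bool) \<Rightarrow> bool" where
  "axiom1 E C \<longleftrightarrow> (\<forall>p\<in>E. \<forall>q\<in>E. \<forall>r\<in>E. distinct3 p q r \<longrightarrow> C p q r \<longrightarrow> C q r p)"

definition axiom2 :: "'a set \<Rightarrow> ('a \<Rightarrow> 'a \<Rightarrow> 'a \<Rightarrow> bool) \<Rightarrow> bool" where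
  "axiom2 E C \<longleftrightarrow> (\<forall>p\<in>E. \<forall>q\<in>E. \<forall>r\<in>E. distinct3 p q r \<longrightarrow> C p q r \<longrightarrow> \<not> C p r q)"

definition axiom3 :: "'a set \<Rightarrow> ('a \<Rightarrow> 'a \<Rightarrow> 'a \<Rightarrow> bool) \<Rightarrow> bool" where
  "axiom3 E C \<longleftrightarrow> (\<forall>p\<in>E. \<forall>q\<in>E. \<forall>r\<in>E. distinct3 p q r \<longrightarrow> C p q r \<or> C p r q)"

definition axiom5 :: "'a set \<Rightarrow> ('a \<Rightarrow> 'a \<Rightarrow> 'a \<Rightarrow> bool) \<Rightarrow> bool" where
  "axiom5 E C \<longleftrightarrow> (\<forall>t\<in>E. \<forall>s\<in>E. \<forall>p\<in>E. \<forall>q\<in>E. \<forall>r\<in>E.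
      distinct [t, s, p, q, r] \<longrightarrow>
      C t s p \<and> C t s q \<and> C t s r \<and> C t p q \<and> C t q r \<longrightarrow> C t p r)"

definition pre_cc_system :: "'a set \<Rightarrow> ('a \<Rightarrow> 'a \<Rightarrow> 'a \<Rightarrow> bool) \<Rightarrow> bool" where
  "pre_cc_system E C \<longleftrightarrow> axiom1 E C \<and> axiom2 E C \<and> axiom3 E C \<and> axiom5 E C"

definition grassmann_pluecker :: "'a set \<Rightarrow> ('a \<Rightarrow> 'a \<Rightarrow> 'a \<Rightarrow> bool) \<Rightarrow> bool" where
  "grassmann_pluecker E C \<longleftrightarrow> (\<forall>t\<in>E. \<forall>p\<in>E. \<forall>q\<in>E. \<forall>r\<in>E. \<forall>s\<in>E.
      distinct [t, p, q, r, s] \<longrightarrow>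
      (let a = ((C t p q \<and> C t r s) \<or> (C t q p \<and> C t s r));
           b = ((C t r p \<and> C t q s) \<or> (C t p r \<and> C t s q));
           c = ((C t p s \<and> C t q r) \<or> (C t s p \<and> C t r q))
       in True \<in> {a, b, c} \<and> False \<in> {a, b, c}))"

definition uniform_chirotope :: "'a set \<Rightarrow> ('a \<Rightarrow> 'a \<Rightarrow> 'a \<Rightarrow> bool) \<Rightarrow> bool" where
  "uniform_chirotope E C \<longleftrightarrow> axiom1 E C \<and> axiom2 E C \<and> axiom3 E C \<and> grassmann_pluecker E C"

end

theory Submission
  imports Defs
begin

(* Under Axioms 1-3 the function C t x y, for a fixed apex t, is a tournament on the other
   points, and both the Grassmann-Pluecker relation and Axiom 5 with apex t only look at this
   tournament on four points p, q, r, s.  The three Grassmann-Pluecker terms coincide exactly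
   when one of the four points beats the other three and these form a 3-cycle (excluded by
   Axiom 5), or is beaten by the other three and these form a 3-cycle (excluded by Axiom 5',
   which is Axiom 5 for the reversed tournaments).  So it remains to derive Axiom 5' from
   Axiom 5: if at apex t the point s is beaten by a cycle p q r, then t is a source at apex s,
   so by Axiom 5 the points p, q, r are ordered transitively around s, and Axiom 5 fails at
   the apex of the first or of the last of them, depending on the orientation of p q r. *)

definition tournament_on :: "'a set \<Rightarrow> ('a \<Rightarrow> 'a \<Rightarrow> bool) \<Rightarrow> bool" where
  "tournament_on A R \<longleftrightarrow> (\<forall>x\<in>A. \<forall>y\<in>A. x \<noteq> y \<longrightarrow> R y x = (\<not> R x y))"

(* Once R is a tournament the last conjunct says that r beats p; stated negatively, Axiom 5
   is literally the absence of this pattern. *)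
definition source_over_cycle :: "('a \<Rightarrow> 'a \<Rightarrow> bool) \<Rightarrow> 'a \<Rightarrow> 'a \<Rightarrow> 'a \<Rightarrow> 'a \<Rightarrow> bool" where
  "source_over_cycle R s p q r \<longleftrightarrow> R s p \<and> R s q \<and> R s r \<and> R p q \<and> R q r \<and> \<not> R p r"

definition grassmann_pluecker_at :: "('a \<Rightarrow> 'a \<Rightarrow> bool) \<Rightarrow> 'a \<Rightarrow> 'a \<Rightarrow> 'a \<Rightarrow> 'a \<Rightarrow> bool" where
  "grassmann_pluecker_at R p q r s \<longleftrightarrow>
     (let a = ((R p q \<and> R r s) \<or> (R q p \<and> R s r));
          b = ((R r p \<and> R q s) \<or> (R p r \<and> R s q));
          c = ((R p s \<and> R q r) \<or> (R s p \<and> R r q))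
      in True \<in> {a, b, c} \<and> False \<in> {a, b, c})"

lemma axiom5_iff_no_source_over_cycle:
  "axiom5 E C \<longleftrightarrow> (\<forall>t\<in>E. \<forall>s\<in>E. \<forall>p\<in>E. \<forall>q\<in>E. \<forall>r\<in>E.
     distinct [t, s, p, q, r] \<longrightarrow> \<not> source_over_cycle (C t) s p q r)"
  unfolding axiom5_def source_over_cycle_def by blast

lemma grassmann_pluecker_iff_at:
  "grassmann_pluecker E C \<longleftrightarrow> (\<forall>t\<in>E. \<forall>p\<in>E. \<forall>q\<in>E. \<forall>r\<in>E. \<forall>s\<in>E.
     distinct [t, p, q, r, s] \<longrightarrow> grassmann_pluecker_at (C t) p q r s)"
  unfolding grassmann_pluecker_def grassmann_pluecker_at_def by (rule refl)

lemma grassmann_pluecker_at_tournament: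
  assumes "tournament_on A R" "p \<in> A" "q \<in> A" "r \<in> A" "s \<in> A" "distinct [p, q, r, s]"
  shows "grassmann_pluecker_at R p q r s \<longleftrightarrow>
           \<not> ((R p q \<longleftrightarrow> R r s) = (R r p \<longleftrightarrow> R q s) \<and> (R r p \<longleftrightarrow> R q s) = (R p s \<longleftrightarrow> R q r))"
proof -
  have "R q p = (\<not> R p q)" "R s r = (\<not> R r s)" "R p r = (\<not> R r p)" "R s q = (\<not> R q s)"
       "R s p = (\<not> R p s)" "R r q = (\<not> R q r)"
    using assms unfolding tournament_on_def by auto
  then show ?thesis
    unfolding grassmann_pluecker_at_def Let_def by auto
qed

lemma not_grassmann_pluecker_at_if_source_over_cycle:
  assumes "tournament_on A R" "p \<in> A" "q \<in> A" "r \<in> A" "s \<in> A" "distinct [p, q, r, s]"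
    and "source_over_cycle R s p q r"
  shows "\<not> grassmann_pluecker_at R p q r s"
proof -
  have "\<not> R r s" "\<not> R q s" "\<not> R p s" "R r p"
    using assms unfolding tournament_on_def source_over_cycle_def by auto
  then show ?thesis
    using assms(7) unfolding grassmann_pluecker_at_tournament[OF assms(1-6)] source_over_cycle_def
    by simp
qed

lemma grassmann_pluecker_at_if_no_source_over_cycle:
  assumes "tournament_on A R" "p \<in> A" "q \<in> A" "r \<in> A" "s \<in> A" "distinct [p, q, r, s]"
    and "\<And>x y z w. x \<in> A \<Longrightarrow> y \<in> A \<Longrightarrow> z \<in> A \<Longrightarrow> w \<in> A \<Longrightarrow> distinct [x, y, z, w] \<Longrightarrow>
           \<not> source_over_cycle R x y z w \<and> \<not> source_over_cycle (\<lambda>x y. R y x) x y z w"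
  shows "grassmann_pluecker_at R p q r s"
proof -
  have reverse: "R q p = (\<not> R p q)" "R s r = (\<not> R r s)" "R p r = (\<not> R r p)" "R s q = (\<not> R q s)"
       "R s p = (\<not> R p s)" "R r q = (\<not> R q r)"
    using assms(1-6) unfolding tournament_on_def by auto
  have "\<forall>x\<in>{p,q,r,s}. \<forall>y\<in>{p,q,r,s}. \<forall>z\<in>{p,q,r,s}. \<forall>w\<in>{p,q,r,s}. distinct [x, y, z, w] \<longrightarrow>
           \<not> source_over_cycle R x y z w \<and> \<not> source_over_cycle (\<lambda>x y. R y x) x y z w"
    using assms(2-5,7) by blast
  then show ?thesis
    using assms(6) unfolding grassmann_pluecker_at_tournament[OF assms(1-6)]
    unfolding source_over_cycle_def
    by (simp only: ball_simps distinct.simps list.set insert_iff empty_iff simp_thms reverse) argo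
qed

locale alternating_triples =
  fixes E :: "'a set" and C :: "'a \<Rightarrow> 'a \<Rightarrow> 'a \<Rightarrow> bool"
  assumes cyclic: "axiom1 E C" and antisymmetric: "axiom2 E C" and nondegenerate: "axiom3 E C"
begin

lemma rotate:
  assumes "p \<in> E" "q \<in> E" "r \<in> E" "distinct [p, q, r]"
  shows "C q r p = C p q r"
proof -
  have step: "C x y z \<Longrightarrow> C y z x" if "x \<in> E" "y \<in> E" "z \<in> E" "distinct [x, y, z]" for x y z
    using cyclic that unfolding axiom1_def distinct3_def by auto
  show ?thesis
    using step[of p q r] step[of q r p] step[of r p q] assms by auto
qed

lemma swap:
  assumes "p \<in> E" "q \<in> E" "r \<in> E" "distinct [p, q, r]"
  shows "C p r q = (\<not> C p q r)"
  using antisymmetric nondegenerate assms unfolding axiom2_def axiom3_def distinct3_def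
  by (metis distinct_length_2_or_more)

lemma permute:
  assumes "p \<in> E" "q \<in> E" "r \<in> E" "distinct [p, q, r]"
  shows "C q r p = C p q r" "C r p q = C p q r"
    "C p r q = (\<not> C p q r)" "C q p r = (\<not> C p q r)" "C r q p = (\<not> C p q r)"
  using rotate[of p q r] rotate[of q r p] swap[of p q r] swap[of q r p] swap[of r p q] assms
  by auto

lemma tournament_on_apex: "tournament_on (E - {t}) (C t)" if "t \<in> E"
  using swap that unfolding tournament_on_def by auto

lemma axiom5_sink_under_cycle_orientation:
  assumes ax5: "axiom5 E C"
    and points: "t \<in> E" "s \<in> E" "p \<in> E" "q \<in> E" "r \<in> E" "distinct [t, s, p, q, r]"
    and sink: "C t p s" "C t q s" "C t r s" and cycle: "C t p q" "C t q r" "C t r p"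
  shows "C s p q \<Longrightarrow> C s p r \<Longrightarrow> \<not> C p q r"
    and "C s q p \<Longrightarrow> C s r p \<Longrightarrow> C p q r"
proof -
  have ax5_at_p: "C p x y \<and> C p x z \<and> C p x w \<and> C p y z \<and> C p z w \<longrightarrow> C p y w"
    if "x \<in> E" "y \<in> E" "z \<in> E" "w \<in> E" "distinct [p, x, y, z, w]" for x y z w
    using ax5 points(3) that unfolding axiom5_def by blast
  have at_p: "C p q t" "C p t r" "C p s t" "\<not> C p t s" "\<not> C p t q"
    using permute[of t p q] permute[of t r p] permute[of t p s] cycle sink points by auto
  show "\<not> C p q r" if "C s p q" "C s p r"
  proof
    assume "C p q r"
    moreover have "C p q s" "C p r s"
      using permute[of s p q] permute[of s p r] that points by auto
    ultimately show False
      using ax5_at_p[of q t r s] at_p points by auto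
  qed
  show "C p q r" if "C s q p" "C s r p"
  proof (rule ccontr)
    assume "\<not> C p q r"
    then have "C p r q"
      using swap[of p q r] points by auto
    moreover have "C p s r" "C p s q"
      using permute[of s r p] permute[of s q p] that points by auto
    ultimately show False
      using ax5_at_p[of s t r q] at_p points by auto
  qed
qed

lemma axiom5_no_sink_under_cycle:
  assumes ax5: "axiom5 E C"
    and points: "t \<in> E" "s \<in> E" "p \<in> E" "q \<in> E" "r \<in> E" "distinct [t, s, p, q, r]"
    and sink: "C t p s" "C t q s" "C t r s" and path: "C t p q" "C t q r"
  shows "C t p r"
proof (rule ccontr)
  assume "\<not> C t p r"
  then have closing: "C t r p"
    using swap[of t p r] points by auto
  have source_at_s: "C s t p" "C s t q" "C s t r"
    using permute[of t p s] permute[of t q s] permute[of t r s] sink points by auto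
  have ax5_at_s: "C s t x \<and> C s t y \<and> C s t z \<and> C s x y \<and> C s y z \<longrightarrow> C s x z"
    if "x \<in> E" "y \<in> E" "z \<in> E" "distinct [s, t, x, y, z]" for x y z
    using ax5 points(1,2) that unfolding axiom5_def by blast
  have transitive_at_s:
    "\<not> (C s p q \<and> C s q r \<and> \<not> C s p r)" "\<not> (C s p r \<and> C s r q \<and> \<not> C s p q)"
    using ax5_at_s[of p q r] ax5_at_s[of p r q] source_at_s points by auto
  have swap_at_s: "C s q p = (\<not> C s p q)" "C s r q = (\<not> C s q r)" "C s r p = (\<not> C s p r)"
    using swap[of s p q] swap[of s q r] swap[of s r p] points by auto
  have rotations: "C q r p = C p q r" "C r p q = C p q r"
    using permute[of p q r] points by auto
  have "distinct [t, s, q, r, p]" "distinct [t, s, r, p, q]"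
    using points(6) by auto
  note orientation_pqr = axiom5_sink_under_cycle_orientation[OF ax5 points sink path closing]
    and orientation_qrp = axiom5_sink_under_cycle_orientation[OF ax5 points(1,2,4,5,3)
      \<open>distinct [t, s, q, r, p]\<close> sink(2,3,1) path(2) closing path(1)]
    and orientation_rpq = axiom5_sink_under_cycle_orientation[OF ax5 points(1,2,5,3,4)
      \<open>distinct [t, s, r, p, q]\<close> sink(3,1,2) closing path]
  show False
    using orientation_pqr orientation_qrp orientation_rpq transitive_at_s swap_at_s rotations by argo
qed

(* Axiom 5 for the reversed orientation is Axiom 5' (with p and r exchanged). *)
lemma axiom5_converse:
  assumes "axiom5 E C"
  shows "axiom5 E (\<lambda>t x y. C t y x)"
  unfolding axiom5_def
proof (intro ballI impI)
  fix t s p q r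
  assume "t \<in> E" "s \<in> E" "p \<in> E" "q \<in> E" "r \<in> E" "distinct [t, s, p, q, r]"
    and "C t p s \<and> C t q s \<and> C t r s \<and> C t q p \<and> C t r q"
  moreover have "distinct [t, s, r, q, p]"
    using \<open>distinct [t, s, p, q, r]\<close> by auto
  ultimately show "C t r p"
    using axiom5_no_sink_under_cycle[OF assms, of t s r q p] by blast
qed

lemma axiom5_if_grassmann_pluecker:
  assumes "grassmann_pluecker E C"
  shows "axiom5 E C"
  unfolding axiom5_iff_no_source_over_cycle
proof (intro ballI impI)
  fix t s p q r
  assume points: "t \<in> E" "s \<in> E" "p \<in> E" "q \<in> E" "r \<in> E" "distinct [t, s, p, q, r]"
  then have "distinct [t, p, q, r, s]"
    by auto
  with assms points have "grassmann_pluecker_at (C t) p q r s"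
    unfolding grassmann_pluecker_iff_at by blast
  then show "\<not> source_over_cycle (C t) s p q r"
    using not_grassmann_pluecker_at_if_source_over_cycle[OF tournament_on_apex[OF points(1)]] points
    by auto
qed

lemma grassmann_pluecker_if_axiom5:
  assumes "axiom5 E C"
  shows "grassmann_pluecker E C"
  unfolding grassmann_pluecker_iff_at
proof (intro ballI impI)
  fix t p q r s
  assume points: "t \<in> E" "p \<in> E" "q \<in> E" "r \<in> E" "s \<in> E" "distinct [t, p, q, r, s]"
  have "\<not> source_over_cycle (C t) x y z w \<and> \<not> source_over_cycle (\<lambda>x y. C t y x) x y z w"
    if "x \<in> E - {t}" "y \<in> E - {t}" "z \<in> E - {t}" "w \<in> E - {t}" "distinct [x, y, z, w]" for x y z w
  proof -
    have "distinct [t, x, y, z, w]"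
      using that by auto
    then show ?thesis
      using assms axiom5_converse[OF assms] points(1) that(1-4)
      unfolding axiom5_iff_no_source_over_cycle by blast
  qed
  then show "grassmann_pluecker_at (C t) p q r s"
    using grassmann_pluecker_at_if_no_source_over_cycle[OF tournament_on_apex[OF points(1)]] points
    by auto
qed

end

theorem lemma2:
  fixes E :: "'a set" and C :: "'a \<Rightarrow> 'a \<Rightarrow> 'a \<Rightarrow> bool"
  assumes "finite E"
  shows "uniform_chirotope E C \<longleftrightarrow> pre_cc_system E C"
proof -
  have "grassmann_pluecker E C \<longleftrightarrow> axiom5 E C"
    if "axiom1 E C" "axiom2 E C" "axiom3 E C"
  proof -
    interpret alternating_triples E C
      using that by unfold_locales
    show ?thesis
      using axiom5_if_grassmann_pluecker grassmann_pluecker_if_axiom5 by blast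
  qed
  then show ?thesis
    unfolding uniform_chirotope_def pre_cc_system_def by blast
qed

end
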